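(* Let $(\Omega,\mathcal A)$ be a measurable space, let $K\subset\mathbb C^n$ be compact and let $A$ be a uniform algebra on $K$ whose maximal ideal space is a separable metric space. Let $f:\Omega\times K\to\mathbb C$ satisfy $f(\omega,\cdot)\in A$ for all $\omega$ and $f(\cdot,z)$ measurable for all $z\in K$. Then the map $\omega\mapsto\sigma(f(\omega,\cdot))$ is a random compact set in $\mathbb C$.
   Context: For $h\in A$, $\sigma(h)=\{\lambda\in\mathbb C:\lambda-h \text{ is not invertible in } A\}$. $\mathcal K'(\mathbb C)$ is the space of non-empty compact subsets of $\mathbb C$ with the Hausdorff distance and its Borel $\sigma$-algebra; a random compact set in $\mathbb C$ is a measurable map $\Omega\to\mathcal K'(\mathbb C)$. *)

theory Defs
  imports "HOL-Analysis.Analysis" "HOL-Probability.Probability"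
begin

text \<open>Elements of a function algebra on K are represented as functions that vanish
  outside K (so that a function on K has a unique representative).\<close>

definition restrictK :: "'a set \<Rightarrow> ('a \<Rightarrow> complex) \<Rightarrow> ('a \<Rightarrow> complex)" where
  "restrictK K g = (\<lambda>z. if z \<in> K then g z else 0)"

definition uniform_algebra :: "'a::topological_space set \<Rightarrow> ('a \<Rightarrow> complex) set \<Rightarrow> bool" where
  "uniform_algebra K A \<longleftrightarrow>
     K \<noteq> {} \<and> compact K \<and>
     (\<forall>g\<in>A. continuous_on K g \<and> (\<forall>z. z \<notin> K \<longrightarrow> g z = 0)) \<and>
     restrictK K (\<lambda>_. 1) \<in> A \<and>
     (\<forall>g\<in>A. \<forall>h\<in>A. (\<lambda>z. g z + h z) \<in> A) \<and>
     (\<forall>g\<in>A. \<forall>h\<in>A. (\<lambda>z. g z * h z) \<in> A) \<and>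
     (\<forall>c. \<forall>g\<in>A. (\<lambda>z. c * g z) \<in> A) \<and>
     (\<forall>x\<in>K. \<forall>y\<in>K. x \<noteq> y \<longrightarrow> (\<exists>g\<in>A. g x \<noteq> g y)) \<and>
     \<comment> \<open>closed in the supremum norm on K\<close>
     (\<forall>G g. (\<forall>n. G n \<in> A) \<and> (\<forall>z. z \<notin> K \<longrightarrow> g z = 0) \<and>
            uniform_limit K G g sequentially \<longrightarrow> g \<in> A)"

definition invertible_in :: "'a set \<Rightarrow> ('a \<Rightarrow> complex) set \<Rightarrow> ('a \<Rightarrow> complex) \<Rightarrow> bool" where
  "invertible_in K A h \<longleftrightarrow> (\<exists>g\<in>A. (\<lambda>z. h z * g z) = restrictK K (\<lambda>_. 1))"

definition spectrum_in :: "'a set \<Rightarrow> ('a \<Rightarrow> complex) set \<Rightarrow> ('a \<Rightarrow> complex) \<Rightarrow> complex set" where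
  "spectrum_in K A h = {l. \<not> invertible_in K A (restrictK K (\<lambda>z. l - h z))}"

text \<open>Characters: nonzero multiplicative linear functionals A \<rightarrow> \<complex>, represented as
  functions on A that are \<open>undefined\<close> off A (as for the product topology).\<close>

definition characters :: "'a set \<Rightarrow> ('a \<Rightarrow> complex) set \<Rightarrow> (('a \<Rightarrow> complex) \<Rightarrow> complex) set" where
  "characters K A = {\<phi>. \<phi> \<in> extensional A \<and>
      (\<forall>g\<in>A. \<forall>h\<in>A. \<phi> (\<lambda>z. g z + h z) = \<phi> g + \<phi> h) \<and>
      (\<forall>c. \<forall>g\<in>A. \<phi> (\<lambda>z. c * g z) = c * \<phi> g) \<and>
      (\<forall>g\<in>A. \<forall>h\<in>A. \<phi> (\<lambda>z. g z * h z) = \<phi> g * \<phi> h) \<and>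
      (\<exists>g\<in>A. \<phi> g \<noteq> 0)}"

definition gelfand_topology :: "'a set \<Rightarrow> ('a \<Rightarrow> complex) set \<Rightarrow> (('a \<Rightarrow> complex) \<Rightarrow> complex) topology" where
  "gelfand_topology K A = subtopology (product_topology (\<lambda>_. euclidean) A) (characters K A)"

definition nonempty_compacts :: "complex set set" where
  "nonempty_compacts = {X. X \<noteq> {} \<and> compact X}"

definition hausdist :: "complex set \<Rightarrow> complex set \<Rightarrow> real" where
  "hausdist X Y = max (SUP x\<in>X. infdist x Y) (SUP y\<in>Y. infdist y X)"

definition hausdorff_open :: "complex set set \<Rightarrow> bool" where
  "hausdorff_open U \<longleftrightarrow> U \<subseteq> nonempty_compacts \<and>
     (\<forall>X\<in>U. \<exists>e>0. \<forall>Y\<in>nonempty_compacts. hausdist X Y < e \<longrightarrow> Y \<in> U)"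

definition hausdorff_borel :: "complex set measure" where
  "hausdorff_borel = sigma nonempty_compacts {U. hausdorff_open U}"

definition random_compact_set :: "'w measure \<Rightarrow> ('w \<Rightarrow> complex set) \<Rightarrow> bool" where
  "random_compact_set M F \<longleftrightarrow> F \<in> measurable M hausdorff_borel"

end

theory Submission
  imports Defs
begin

lemma uniform_algebra_nonempty: "uniform_algebra K A \<Longrightarrow> K \<noteq> {}"
  unfolding uniform_algebra_def by (elim conjE) blast

lemma uniform_algebra_compact: "uniform_algebra K A \<Longrightarrow> compact K"
  unfolding uniform_algebra_def by (elim conjE) blast

lemma uniform_algebra_one: "uniform_algebra K A \<Longrightarrow> restrictK K (\<lambda>_. 1) \<in> A"
  unfolding uniform_algebra_def by (elim conjE) blast

lemma uniform_algebra_continuous_on: "uniform_algebra K A \<Longrightarrow> g \<in> A \<Longrightarrow> continuous_on K g"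
  unfolding uniform_algebra_def by (elim conjE) blast

lemma uniform_algebra_vanishes: "uniform_algebra K A \<Longrightarrow> g \<in> A \<Longrightarrow> z \<notin> K \<Longrightarrow> g z = 0"
  unfolding uniform_algebra_def by (elim conjE) blast

lemma uniform_algebra_cmult: "uniform_algebra K A \<Longrightarrow> g \<in> A \<Longrightarrow> (\<lambda>z. c * g z) \<in> A"
  unfolding uniform_algebra_def by (elim conjE) blast

lemma uniform_algebra_add:
  "uniform_algebra K A \<Longrightarrow> g \<in> A \<Longrightarrow> h \<in> A \<Longrightarrow> (\<lambda>z. g z + h z) \<in> A"
  unfolding uniform_algebra_def by (elim conjE) blast

lemma uniform_algebra_mult:
  "uniform_algebra K A \<Longrightarrow> g \<in> A \<Longrightarrow> h \<in> A \<Longrightarrow> (\<lambda>z. g z * h z) \<in> A"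
  unfolding uniform_algebra_def by (elim conjE) blast

lemma uniform_algebra_uniform_limit:
  assumes "uniform_algebra K A" and "\<And>n. G n \<in> A" and "\<And>z. z \<notin> K \<Longrightarrow> g z = 0"
    and "uniform_limit K G g sequentially"
  shows "g \<in> A"
proof -
  have "\<forall>G g. (\<forall>n. G n \<in> A) \<and> (\<forall>z. z \<notin> K \<longrightarrow> g z = 0) \<and> uniform_limit K G g sequentially \<longrightarrow> g \<in> A"
    using assms(1) unfolding uniform_algebra_def by (elim conjE) assumption
  moreover have "(\<forall>n. G n \<in> A) \<and> (\<forall>z. z \<notin> K \<longrightarrow> g z = 0) \<and> uniform_limit K G g sequentially"
    by (intro conjI allI impI assms(2-4))
  ultimately show ?thesis
    by (elim allE impE)
qed

lemma restrictK_in [simp]: "z \<in> K \<Longrightarrow> restrictK K g z = g z"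
  by (simp add: restrictK_def)

lemma restrictK_notin [simp]: "z \<notin> K \<Longrightarrow> restrictK K g z = 0"
  by (simp add: restrictK_def)

lemma uniform_algebra_eq_on:
  assumes "uniform_algebra K A" and "g \<in> A"
    and "\<And>z. z \<in> K \<Longrightarrow> h z = g z" and "\<And>z. z \<notin> K \<Longrightarrow> h z = 0"
  shows "h \<in> A"
proof -
  have "h = g"
    using assms uniform_algebra_vanishes by fastforce
  with assms(2) show ?thesis by simp
qed

lemma uniform_algebra_restrictK_diff:
  assumes "uniform_algebra K A" and "h \<in> A"
  shows "restrictK K (\<lambda>z. l - h z) \<in> A"
proof (rule uniform_algebra_eq_on[OF assms(1)])
  show "(\<lambda>z. l * restrictK K (\<lambda>_. 1) z + (-1) * h z) \<in> A"
    using assms by (intro uniform_algebra_add uniform_algebra_cmult uniform_algebra_one)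
qed (use assms uniform_algebra_vanishes in auto)

lemma uniform_limit_geometric_sum:
  fixes r :: "'a \<Rightarrow> 'b::{real_normed_field, banach}"
  assumes "\<And>z. z \<in> K \<Longrightarrow> norm (r z) \<le> q" and "0 \<le> q" and "q < 1"
  shows "uniform_limit K (\<lambda>n z. \<Sum>i<n. r z ^ i) (\<lambda>z. 1 / (1 - r z)) sequentially"
proof -
  have "uniform_limit K (\<lambda>n z. \<Sum>i<n. r z ^ i) (\<lambda>z. \<Sum>i. r z ^ i) sequentially"
  proof (rule Weierstrass_m_test)
    show "norm (r z ^ n) \<le> q ^ n" if "z \<in> K" for n z
      using assms(1)[OF that] by (simp add: norm_power power_mono)
    show "summable (\<lambda>n. q ^ n)"
      using assms(2,3) by (simp add: summable_geometric)
  qed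
  moreover have "(\<Sum>i. r z ^ i) = 1 / (1 - r z)" if "z \<in> K" for z
    using assms(1)[OF that] assms(3) by (simp add: suminf_geometric)
  ultimately show ?thesis
    by (simp cong: uniform_limit_cong')
qed

lemma uniform_algebra_inverse_one_minus:
  assumes ua: "uniform_algebra K A" and r: "r \<in> A"
    and bound: "\<And>z. z \<in> K \<Longrightarrow> cmod (r z) \<le> q" and "0 \<le> q" and "q < 1"
  shows "restrictK K (\<lambda>z. 1 / (1 - r z)) \<in> A"
proof (rule uniform_algebra_uniform_limit[OF ua])
  define S where "S n = restrictK K (\<lambda>z. \<Sum>i<n. r z ^ i)" for n
  show "S n \<in> A" for n
  proof (induction n)
    case 0
    show ?case
      by (rule uniform_algebra_eq_on[OF ua uniform_algebra_cmult[OF ua uniform_algebra_one[OF ua], of 0]])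
        (simp_all add: S_def)
  next
    case (Suc n)
    show ?case
    proof (rule uniform_algebra_eq_on[OF ua])
      show "(\<lambda>z. restrictK K (\<lambda>_. 1) z + r z * S n z) \<in> A"
        using ua r Suc.IH by (intro uniform_algebra_add uniform_algebra_mult uniform_algebra_one)
      show "S (Suc n) z = restrictK K (\<lambda>_. 1) z + r z * S n z" if "z \<in> K" for z
        using that by (simp del: sum.lessThan_Suc
            add: S_def sum.lessThan_Suc_shift sum_distrib_left power_Suc)
    qed (simp add: S_def)
  qed
  show "uniform_limit K S (restrictK K (\<lambda>z. 1 / (1 - r z))) sequentially"
    using uniform_limit_geometric_sum[OF bound assms(4,5)] by (simp add: S_def cong: uniform_limit_cong')
qed simp

lemma invertible_in_approx_inverse:
  assumes ua: "uniform_algebra K A" and u: "u \<in> A" and w: "w \<in> A"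
    and bound: "\<And>z. z \<in> K \<Longrightarrow> cmod (1 - w z * u z) \<le> q" and "0 \<le> q" and "q < 1"
  shows "invertible_in K A u"
proof -
  define r where "r z = restrictK K (\<lambda>_. 1) z + (-1) * (w z * u z)" for z
  have "r \<in> A"
    unfolding r_def using ua u w by (intro uniform_algebra_add uniform_algebra_cmult
        uniform_algebra_mult uniform_algebra_one)
  moreover have r_K: "r z = 1 - w z * u z" if "z \<in> K" for z
    using that by (simp add: r_def)
  ultimately have g: "restrictK K (\<lambda>z. 1 / (1 - r z)) \<in> A"
    using bound assms(5,6) by (intro uniform_algebra_inverse_one_minus[OF ua]) auto
  have nonzero: "w z * u z \<noteq> 0" if "z \<in> K" for z
    using bound[OF that] assms(6) by auto
  have "(\<lambda>z. u z * (w z * restrictK K (\<lambda>z. 1 / (1 - r z)) z)) = restrictK K (\<lambda>_. 1)"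
  proof
    fix z
    show "u z * (w z * restrictK K (\<lambda>z. 1 / (1 - r z)) z) = restrictK K (\<lambda>_. 1) z"
      using nonzero[of z] r_K[of z] uniform_algebra_vanishes[OF ua u, of z]
      by (cases "z \<in> K") (auto simp: field_simps)
  qed
  then show ?thesis
    unfolding invertible_in_def using uniform_algebra_mult[OF ua w g] by (intro bexI)
qed

lemma value_in_spectrum_in:
  assumes "z \<in> K"
  shows "h z \<in> spectrum_in K A h"
proof -
  have "restrictK K (\<lambda>y. h z - h y) z * g z \<noteq> restrictK K (\<lambda>_. 1) z" for g
    using assms by simp
  then have "\<not> invertible_in K A (restrictK K (\<lambda>y. h z - h y))"
    unfolding invertible_in_def by metis
  then show ?thesis
    unfolding spectrum_in_def by simp
qed

lemma invertible_in_perturb: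
  assumes ua: "uniform_algebra K A" and h: "h \<in> A"
    and inv: "invertible_in K A (restrictK K (\<lambda>z. l - h z))"
  shows "\<exists>\<rho>>0. \<forall>m h'. h' \<in> A \<longrightarrow> cmod (m - l) \<le> \<rho> \<longrightarrow> (\<forall>z\<in>K. cmod (h' z - h z) \<le> \<rho>) \<longrightarrow>
     invertible_in K A (restrictK K (\<lambda>z. m - h' z))"
proof -
  obtain g where g: "g \<in> A" and "(\<lambda>z. restrictK K (\<lambda>z. l - h z) z * g z) = restrictK K (\<lambda>_. 1)"
    using inv unfolding invertible_in_def by blast
  then have g_inverse: "(l - h z) * g z = 1" if "z \<in> K" for z
    using that by (metis restrictK_in)
  have "compact (g ` K)"
    by (rule compact_continuous_image[OF uniform_algebra_continuous_on[OF ua g] uniform_algebra_compact[OF ua]])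
  then obtain B where B: "B > 0" "\<And>z. z \<in> K \<Longrightarrow> cmod (g z) \<le> B"
    using compact_imp_bounded bounded_pos by (metis image_eqI)
  show ?thesis
  proof (intro exI[of _ "1 / (4 * B)"] conjI allI impI)
    show "1 / (4 * B) > 0"
      using B by simp
    fix m h' assume h': "h' \<in> A" and m: "cmod (m - l) \<le> 1 / (4 * B)"
      and near: "\<forall>z\<in>K. cmod (h' z - h z) \<le> 1 / (4 * B)"
    show "invertible_in K A (restrictK K (\<lambda>z. m - h' z))"
    proof (rule invertible_in_approx_inverse[OF ua uniform_algebra_restrictK_diff[OF ua h'] g])
      fix z assume z: "z \<in> K"
      have "1 - g z * restrictK K (\<lambda>z. m - h' z) z = g z * ((l - m) + (h' z - h z))"
        using g_inverse[OF z] z by (simp add: algebra_simps)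
      also have "cmod \<dots> \<le> B * (1 / (4 * B) + 1 / (4 * B))"
        unfolding norm_mult
      proof (rule mult_mono)
        show "cmod (l - m + (h' z - h z)) \<le> 1 / (4 * B) + 1 / (4 * B)"
          using norm_triangle_ineq[of "l - m" "h' z - h z"] m bspec[OF near z] norm_minus_commute[of l m]
          by linarith
      qed (use B z in auto)
      also have "\<dots> = 1 / 2"
        using B by (simp add: field_simps)
      finally show "cmod (1 - g z * restrictK K (\<lambda>z. m - h' z) z) \<le> 1 / 2" .
    qed simp_all
  qed
qed

lemma spectrum_in_subset_cball:
  assumes ua: "uniform_algebra K A" and h: "h \<in> A" and B: "\<And>z. z \<in> K \<Longrightarrow> cmod (h z) \<le> B"
  shows "spectrum_in K A h \<subseteq> cball 0 B"
proof
  fix l assume l: "l \<in> spectrum_in K A h"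
  obtain z where "z \<in> K"
    using uniform_algebra_nonempty[OF ua] by blast
  then have "0 \<le> B"
    using B norm_ge_zero order_trans by blast
  show "l \<in> cball 0 B"
  proof (rule ccontr)
    assume "l \<notin> cball 0 B"
    then have lB: "B < cmod l"
      by simp
    then have "l \<noteq> 0"
      using \<open>0 \<le> B\<close> by auto
    have "invertible_in K A (restrictK K (\<lambda>z. l - h z))"
    proof (rule invertible_in_approx_inverse[OF ua uniform_algebra_restrictK_diff[OF ua h]
          uniform_algebra_cmult[OF ua uniform_algebra_one[OF ua], of "1 / l"]])
      show "0 \<le> B / cmod l"
        using \<open>0 \<le> B\<close> by simp
      show "B / cmod l < 1"
        using lB \<open>0 \<le> B\<close> by (subst divide_less_eq_1_pos) auto
      fix z assume z: "z \<in> K"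
      have "1 - 1 / l * restrictK K (\<lambda>_. 1) z * restrictK K (\<lambda>z. l - h z) z = h z / l"
        using z \<open>l \<noteq> 0\<close> by (simp add: field_simps)
      then show "cmod (1 - 1 / l * restrictK K (\<lambda>_. 1) z * restrictK K (\<lambda>z. l - h z) z) \<le> B / cmod l"
        using B[OF z] by (simp add: norm_divide divide_right_mono)
    qed
    then show False
      using l unfolding spectrum_in_def by simp
  qed
qed

lemma closed_spectrum_in:
  assumes ua: "uniform_algebra K A" and h: "h \<in> A"
  shows "closed (spectrum_in K A h)"
  unfolding closed_def open_contains_cball
proof
  fix l assume "l \<in> - spectrum_in K A h"
  then have "invertible_in K A (restrictK K (\<lambda>z. l - h z))"
    unfolding spectrum_in_def by simp
  then obtain \<rho> where "\<rho> > 0" and perturb: "\<forall>m h'. h' \<in> A \<longrightarrow> cmod (m - l) \<le> \<rho> \<longrightarrow>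
      (\<forall>z\<in>K. cmod (h' z - h z) \<le> \<rho>) \<longrightarrow> invertible_in K A (restrictK K (\<lambda>z. m - h' z))"
    using invertible_in_perturb[OF ua h] by blast
  have "invertible_in K A (restrictK K (\<lambda>z. m - h z))" if "cmod (m - l) \<le> \<rho>" for m
    using perturb[rule_format, OF h that] \<open>\<rho> > 0\<close> by simp
  then have "cball l \<rho> \<subseteq> - spectrum_in K A h"
    by (auto simp: spectrum_in_def dist_norm norm_minus_commute)
  with \<open>\<rho> > 0\<close> show "\<exists>e>0. cball l e \<subseteq> - spectrum_in K A h"
    by blast
qed

lemma spectrum_in_nonempty_compacts:
  assumes ua: "uniform_algebra K A" and h: "h \<in> A"
  shows "spectrum_in K A h \<in> nonempty_compacts"
proof -
  have "compact (h ` K)"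
    by (rule compact_continuous_image[OF uniform_algebra_continuous_on[OF ua h] uniform_algebra_compact[OF ua]])
  then have "bounded (h ` K)"
    by (rule compact_imp_bounded)
  then obtain B where "\<forall>x\<in>h ` K. cmod x \<le> B"
    unfolding bounded_iff by blast
  then have "spectrum_in K A h \<subseteq> cball 0 B"
    by (intro spectrum_in_subset_cball[OF ua h]) simp
  then have "bounded (spectrum_in K A h)"
    by (rule bounded_subset[OF bounded_cball])
  moreover obtain z where "z \<in> K"
    using uniform_algebra_nonempty[OF ua] by blast
  then have "h z \<in> spectrum_in K A h"
    by (rule value_in_spectrum_in)
  ultimately show ?thesis
    unfolding nonempty_compacts_def using closed_spectrum_in[OF ua h] compact_eq_bounded_closed by auto
qed

lemma compact_cover_uniform_radius:
  fixes C :: "'a::metric_space set"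
  assumes "compact C" and pos: "\<And>l. l \<in> C \<Longrightarrow> 0 < \<rho> l"
  obtains r where "r > 0" and "\<And>m. m \<in> C \<Longrightarrow> \<exists>l\<in>C. dist l m < \<rho> l \<and> r \<le> \<rho> l"
proof -
  have "C \<subseteq> (\<Union>l\<in>C. ball l (\<rho> l))"
  proof
    fix l assume "l \<in> C"
    then show "l \<in> (\<Union>l\<in>C. ball l (\<rho> l))"
      by (rule UN_I) (simp add: pos[OF \<open>l \<in> C\<close>])
  qed
  then obtain C' where C': "C' \<subseteq> C" "finite C'" "C \<subseteq> (\<Union>l\<in>C'. ball l (\<rho> l))"
    using compactE_image[OF \<open>compact C\<close>, of C "\<lambda>l. ball l (\<rho> l)"] by blast
  define r where "r = Min (insert 1 (\<rho> ` C'))"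
  have "r > 0"
    unfolding r_def using C' pos by (subst Min_gr_iff) auto
  moreover have "\<exists>l\<in>C. dist l m < \<rho> l \<and> r \<le> \<rho> l" if "m \<in> C" for m
  proof -
    have "m \<in> (\<Union>l\<in>C'. ball l (\<rho> l))"
      using C'(3) \<open>m \<in> C\<close> by (rule subsetD)
    then obtain l where "l \<in> C'" "dist l m < \<rho> l"
      by auto
    moreover have "r \<le> \<rho> l"
      unfolding r_def using C'(2) \<open>l \<in> C'\<close> by (intro Min_le) auto
    ultimately show ?thesis
      using C'(1) by blast
  qed
  ultimately show ?thesis
    by (rule that)
qed

lemma spectrum_in_upper_semicontinuous:
  assumes ua: "uniform_algebra K A" and h: "h \<in> A" and "compact C"
    and disjoint: "spectrum_in K A h \<inter> C = {}"
  shows "\<exists>r>0. \<forall>h'\<in>A. (\<forall>z\<in>K. cmod (h' z - h z) \<le> r) \<longrightarrow> spectrum_in K A h' \<inter> C = {}"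
proof -
  have "\<forall>l\<in>C. \<exists>\<rho>>0. \<forall>m h'. h' \<in> A \<longrightarrow> cmod (m - l) \<le> \<rho> \<longrightarrow>
       (\<forall>z\<in>K. cmod (h' z - h z) \<le> \<rho>) \<longrightarrow> invertible_in K A (restrictK K (\<lambda>z. m - h' z))"
  proof
    fix l assume "l \<in> C"
    then have "invertible_in K A (restrictK K (\<lambda>z. l - h z))"
      using disjoint unfolding spectrum_in_def by blast
    then show "\<exists>\<rho>>0. \<forall>m h'. h' \<in> A \<longrightarrow> cmod (m - l) \<le> \<rho> \<longrightarrow>
       (\<forall>z\<in>K. cmod (h' z - h z) \<le> \<rho>) \<longrightarrow> invertible_in K A (restrictK K (\<lambda>z. m - h' z))"
      by (rule invertible_in_perturb[OF ua h])
  qed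
  then obtain \<rho> where \<rho>: "\<forall>l\<in>C. \<rho> l > 0 \<and> (\<forall>m h'. h' \<in> A \<longrightarrow> cmod (m - l) \<le> \<rho> l \<longrightarrow>
       (\<forall>z\<in>K. cmod (h' z - h z) \<le> \<rho> l) \<longrightarrow> invertible_in K A (restrictK K (\<lambda>z. m - h' z)))"
    by (rule bchoice[THEN exE])
  obtain r where "r > 0" and r: "\<And>m. m \<in> C \<Longrightarrow> \<exists>l\<in>C. dist l m < \<rho> l \<and> r \<le> \<rho> l"
    using compact_cover_uniform_radius[OF \<open>compact C\<close>, of \<rho>] \<rho> by blast
  have "spectrum_in K A h' \<inter> C = {}"
    if h': "h' \<in> A" and near: "\<forall>z\<in>K. cmod (h' z - h z) \<le> r" for h'
  proof -
    have "invertible_in K A (restrictK K (\<lambda>z. m - h' z))" if "m \<in> C" for m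
    proof -
      obtain l where l: "l \<in> C" "dist l m < \<rho> l" "r \<le> \<rho> l"
        using r[OF \<open>m \<in> C\<close>] by blast
      have "cmod (m - l) \<le> \<rho> l"
        using l(2) by (simp add: dist_norm norm_minus_commute)
      moreover have "\<forall>z\<in>K. cmod (h' z - h z) \<le> \<rho> l"
        using near l(3) order.trans by blast
      ultimately show ?thesis
        using \<rho> l(1) h' by blast
    qed
    then show ?thesis
      unfolding spectrum_in_def by blast
  qed
  with \<open>r > 0\<close> show ?thesis
    by blast
qed

lemma countable_dense_setE:
  obtains D :: "'a::{metric_space, second_countable_topology} set"
  where "countable D" "\<And>x e. 0 < e \<Longrightarrow> \<exists>d\<in>D. dist d x < e"
proof -
  obtain D :: "'a set" where D: "countable D" "\<And>X. open X \<Longrightarrow> X \<noteq> {} \<Longrightarrow> \<exists>d\<in>D. d \<in> X"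
    using countable_dense_exists by blast
  have "\<exists>d\<in>D. dist d x < e" if "0 < e" for x e
    using D(2)[of "ball x e"] that by (auto simp: dist_commute)
  with D(1) show ?thesis
    using that by blast
qed

definition tent :: "real \<Rightarrow> 'a::metric_space \<Rightarrow> 'a \<Rightarrow> real" where
  "tent \<delta> x z = max 0 (\<delta> - dist z x)"

definition tent_average :: "real \<Rightarrow> ('a::metric_space \<times> complex) set \<Rightarrow> 'a \<Rightarrow> complex" where
  "tent_average \<delta> G z =
     (\<Sum>p\<in>G. of_real (tent \<delta> (fst p) z) * snd p) / of_real (\<Sum>p\<in>G. tent \<delta> (fst p) z)"

definition tent_averages :: "'a::metric_space set \<Rightarrow> 'a set \<Rightarrow> complex set \<Rightarrow> ('a \<Rightarrow> complex) set" where
  "tent_averages K Q D = (\<lambda>(n, G). tent_average (1 / real (Suc n)) G) `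
     {(n, G). finite G \<and> G \<subseteq> Q \<times> D \<and> (\<forall>z\<in>K. 0 < (\<Sum>p\<in>G. tent (1 / real (Suc n)) (fst p) z))}"

lemma countable_tent_averages:
  assumes "countable Q" and "countable D"
  shows "countable (tent_averages K Q D)"
proof -
  have "countable {G. finite G \<and> G \<subseteq> Q \<times> D}"
    using assms by (intro countable_Collect_finite_subset countable_SIGMA)
  then have "countable ((UNIV :: nat set) \<times> {G. finite G \<and> G \<subseteq> Q \<times> D})"
    by (simp add: countable_SIGMA)
  then show ?thesis
    unfolding tent_averages_def by (rule countable_image[OF countable_subset, rotated]) blast
qed

lemma continuous_on_tent_averages:
  assumes "p \<in> tent_averages K Q D"
  shows "continuous_on K p"
proof -
  obtain n G where p: "p = tent_average (1 / real (Suc n)) G"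
    and pos: "\<forall>z\<in>K. 0 < (\<Sum>p\<in>G. tent (1 / real (Suc n)) (fst p) z)"
    using assms unfolding tent_averages_def by auto
  have "continuous_on K (tent \<delta> x)" for \<delta> x
    unfolding tent_def by (intro continuous_intros)
  then show ?thesis
    unfolding p tent_average_def using pos
    by (intro continuous_intros) (auto simp flip: of_real_sum)
qed

lemma norm_diff_weighted_average_le:
  fixes w :: "'b \<Rightarrow> real" and a :: "'b \<Rightarrow> complex"
  assumes "finite G" and "\<And>p. p \<in> G \<Longrightarrow> 0 \<le> w p" and "0 < sum w G"
    and "\<And>p. p \<in> G \<Longrightarrow> 0 < w p \<Longrightarrow> cmod (a p - c) \<le> \<epsilon>"
  shows "cmod (c - (\<Sum>p\<in>G. of_real (w p) * a p) / of_real (sum w G)) \<le> \<epsilon>"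
proof -
  have "(\<Sum>p\<in>G. of_real (w p) * (c - a p)) = c * of_real (sum w G) - (\<Sum>p\<in>G. of_real (w p) * a p)"
    by (simp add: algebra_simps sum_subtractf sum_distrib_left of_real_sum)
  then have "c - (\<Sum>p\<in>G. of_real (w p) * a p) / of_real (sum w G)
        = (\<Sum>p\<in>G. of_real (w p) * (c - a p)) / of_real (sum w G)"
    using assms(3) by (simp add: diff_divide_distrib of_real_sum[symmetric] del: of_real_sum)
  also have "cmod \<dots> \<le> (\<Sum>p\<in>G. w p * \<epsilon>) / sum w G"
  proof -
    have "cmod (\<Sum>p\<in>G. of_real (w p) * (c - a p)) \<le> (\<Sum>p\<in>G. cmod (of_real (w p) * (c - a p)))"
      by (rule norm_sum)
    also have "\<dots> \<le> (\<Sum>p\<in>G. w p * \<epsilon>)"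
    proof (rule sum_mono)
      fix p assume "p \<in> G"
      then show "cmod (of_real (w p) * (c - a p)) \<le> w p * \<epsilon>"
        using assms(2,4)[OF \<open>p \<in> G\<close>] by (cases "w p = 0") (auto simp: norm_mult norm_minus_commute)
    qed
    finally show ?thesis
      using assms(3) by (simp add: norm_divide divide_right_mono del: of_real_sum)
  qed
  also have "\<dots> = \<epsilon>"
    using assms(3) by (simp add: sum_distrib_right[symmetric])
  finally show ?thesis .
qed

lemma tent_averages_dense:
  fixes K :: "'a::metric_space set"
  assumes K: "compact K" and Q: "Q \<subseteq> K" "K \<subseteq> closure Q"
    and D: "\<And>x e. 0 < e \<Longrightarrow> \<exists>d\<in>D. dist d x < e"
    and h: "continuous_on K h" and "0 < \<epsilon>"
  shows "\<exists>p\<in>tent_averages K Q D. \<forall>z\<in>K. cmod (h z - p z) \<le> \<epsilon>"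
proof -
  obtain d where "d > 0" and d: "\<And>x y. x \<in> K \<Longrightarrow> y \<in> K \<Longrightarrow> dist y x < d \<Longrightarrow> dist (h y) (h x) < \<epsilon> / 2"
    using compact_uniformly_continuous[OF h K] \<open>0 < \<epsilon>\<close>
    unfolding uniformly_continuous_on_def by (metis half_gt_zero)
  obtain n :: nat where n: "1 / real (Suc n) < d"
    using nat_approx_posE[OF \<open>d > 0\<close>] by blast
  define \<delta> where "\<delta> = 1 / real (Suc n)"
  have "K \<subseteq> (\<Union>x\<in>Q. ball x \<delta>)"
    using Q unfolding \<delta>_def by (force simp: closure_approachable dist_commute)
  then obtain F where F: "F \<subseteq> Q" "finite F" "K \<subseteq> (\<Union>x\<in>F. ball x \<delta>)"
    using compactE_image[OF K, of Q "\<lambda>x. ball x \<delta>"] by blast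
  have "\<exists>d\<in>D. dist d (h x) < \<epsilon> / 2" for x
    using D[of "\<epsilon> / 2" "h x"] \<open>0 < \<epsilon>\<close> by simp
  then obtain v where v: "\<And>x. v x \<in> D" "\<And>x. dist (v x) (h x) < \<epsilon> / 2"
    by metis
  define G where "G = (\<lambda>x. (x, v x)) ` F"
  have "finite G"
    using F unfolding G_def by simp
  have tent_nonneg: "0 \<le> tent \<delta> x z" for x z
    unfolding tent_def by simp
  have pos: "0 < (\<Sum>p\<in>G. tent \<delta> (fst p) z)" if "z \<in> K" for z
  proof -
    obtain x where x: "x \<in> F" "z \<in> ball x \<delta>"
      using F \<open>z \<in> K\<close> by blast
    then have "0 < tent \<delta> (fst (x, v x)) z" "(x, v x) \<in> G"
      unfolding tent_def G_def by (auto simp: dist_commute)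
    then show ?thesis
      using \<open>finite G\<close> tent_nonneg by (intro sum_pos2) auto
  qed
  have "tent_average \<delta> G \<in> tent_averages K Q D"
    unfolding tent_averages_def using \<open>finite G\<close> F v pos
    by (intro image_eqI[of _ _ "(n, G)"]) (auto simp: \<delta>_def G_def)
  moreover have "cmod (h z - tent_average \<delta> G z) \<le> \<epsilon>" if z: "z \<in> K" for z
    unfolding tent_average_def
  proof (rule norm_diff_weighted_average_le[OF \<open>finite G\<close> tent_nonneg pos[OF z]])
    fix p assume "p \<in> G" and "0 < tent \<delta> (fst p) z"
    then obtain x where x: "x \<in> F" "p = (x, v x)" "dist z x < \<delta>"
      unfolding G_def tent_def by auto
    then have "dist (h z) (h x) < \<epsilon> / 2"
      using d[of x z] F Q z n unfolding \<delta>_def by auto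
    then show "cmod (snd p - h z) \<le> \<epsilon>"
      using v(2)[of x] x(2) dist_triangle_half_l[of "v x" "h x" \<epsilon> "h z"]
      by (simp add: dist_commute dist_norm norm_minus_commute)
  qed
  ultimately show ?thesis
    by blast
qed

lemma continuous_on_countable_dense:
  fixes K :: "'a::{metric_space, second_countable_topology} set"
  assumes "compact K"
  obtains P where "countable P" and "\<And>p. p \<in> P \<Longrightarrow> continuous_on K p"
    and "\<And>h \<epsilon>. continuous_on K h \<Longrightarrow> 0 < \<epsilon> \<Longrightarrow> \<exists>p\<in>P. \<forall>z\<in>K. cmod (h z - p z) \<le> \<epsilon>"
proof -
  obtain Q where Q: "countable Q" "Q \<subseteq> K" "K \<subseteq> closure Q"
    using separable by blast
  obtain D :: "complex set" where D: "countable D" "\<And>x e. 0 < e \<Longrightarrow> \<exists>d\<in>D. dist d x < e"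
    using countable_dense_setE by blast
  show ?thesis
    by (rule that[OF countable_tent_averages[OF Q(1) D(1)] continuous_on_tent_averages
          tent_averages_dense[OF assms Q(2,3) D(2)]])
qed

lemma sets_Collect_sup_dist_le:
  fixes K :: "'a::{metric_space, second_countable_topology} set"
  assumes "closed K"
    and cont: "\<And>\<omega>. \<omega> \<in> space M \<Longrightarrow> continuous_on K (g \<omega>)"
    and meas: "\<And>z. z \<in> K \<Longrightarrow> (\<lambda>\<omega>. g \<omega> z) \<in> borel_measurable M"
    and p: "continuous_on K p"
  shows "{\<omega>\<in>space M. \<forall>z\<in>K. cmod (g \<omega> z - p z) \<le> c} \<in> sets M"
proof -
  obtain Q where Q: "countable Q" "Q \<subseteq> K" "K \<subseteq> closure Q"
    using separable by blast
  have "closure Q \<subseteq> K"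
    using Q(2) \<open>closed K\<close> by (rule closure_minimal)
  have "(\<forall>z\<in>K. cmod (g \<omega> z - p z) \<le> c) \<longleftrightarrow> (\<forall>z\<in>Q. cmod (g \<omega> z - p z) \<le> c)"
    if "\<omega> \<in> space M" for \<omega>
  proof
    assume "\<forall>z\<in>Q. cmod (g \<omega> z - p z) \<le> c"
    moreover have "continuous_on (closure Q) (\<lambda>z. g \<omega> z - p z)"
      using cont[OF that] p \<open>closure Q \<subseteq> K\<close> by (intro continuous_intros) (auto intro: continuous_on_subset)
    ultimately show "\<forall>z\<in>K. cmod (g \<omega> z - p z) \<le> c"
      using Q(3) continuous_on_closure_norm_le by blast
  qed (use Q(2) in blast)
  then have "{\<omega>\<in>space M. \<forall>z\<in>K. cmod (g \<omega> z - p z) \<le> c} = {\<omega>\<in>space M. \<forall>z\<in>Q. cmod (g \<omega> z - p z) \<le> c}"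
    by blast
  also have "\<dots> \<in> sets M"
  proof (rule sets.sets_Collect_countable_All'[OF _ Q(1)])
    fix z assume "z \<in> Q"
    then have "(\<lambda>\<omega>. g \<omega> z) \<in> borel_measurable M"
      using meas Q(2) by blast
    then show "{\<omega>\<in>space M. cmod (g \<omega> z - p z) \<le> c} \<in> sets M"
      by measurable
  qed
  finally show ?thesis .
qed

lemma sets_Collect_sup_open:
  fixes K :: "'a::{metric_space, second_countable_topology} set"
  assumes "compact K"
    and A_cont: "\<And>h. h \<in> A \<Longrightarrow> continuous_on K h"
    and g: "\<And>\<omega>. \<omega> \<in> space M \<Longrightarrow> g \<omega> \<in> A"
    and meas: "\<And>z. z \<in> K \<Longrightarrow> (\<lambda>\<omega>. g \<omega> z) \<in> borel_measurable M"
    and P_open: "\<And>h. h \<in> A \<Longrightarrow> P h \<Longrightarrow> \<exists>r>0. \<forall>h'\<in>A. (\<forall>z\<in>K. cmod (h' z - h z) \<le> r) \<longrightarrow> P h'"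
  shows "{\<omega>\<in>space M. P (g \<omega>)} \<in> sets M"
proof -
  obtain F where "countable F" and F_cont: "\<And>p. p \<in> F \<Longrightarrow> continuous_on K p"
    and F_dense: "\<And>h \<epsilon>. continuous_on K h \<Longrightarrow> 0 < \<epsilon> \<Longrightarrow> \<exists>p\<in>F. \<forall>z\<in>K. cmod (h z - p z) \<le> \<epsilon>"
    using continuous_on_countable_dense[OF \<open>compact K\<close>] by blast
  define I where "I = {(p, n) \<in> F \<times> (UNIV :: nat set).
    \<forall>h\<in>A. (\<forall>z\<in>K. cmod (h z - p z) \<le> 1 / real (Suc n)) \<longrightarrow> P h}"
  have "countable I"
    unfolding I_def using \<open>countable F\<close> by (intro countable_subset[OF _ countable_SIGMA]) auto
  have "P (g \<omega>) \<longleftrightarrow> (\<exists>(p, n)\<in>I. \<forall>z\<in>K. cmod (g \<omega> z - p z) \<le> 1 / real (Suc n))"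
    if \<omega>: "\<omega> \<in> space M" for \<omega>
  proof
    assume "P (g \<omega>)"
    then obtain r where "r > 0" and r: "\<forall>h'\<in>A. (\<forall>z\<in>K. cmod (h' z - g \<omega> z) \<le> r) \<longrightarrow> P h'"
      using P_open g[OF \<omega>] by blast
    obtain n :: nat where n: "1 / real (Suc n) < r / 2"
      using nat_approx_posE[of "r / 2"] \<open>r > 0\<close> by auto
    obtain p where p: "p \<in> F" "\<forall>z\<in>K. cmod (g \<omega> z - p z) \<le> 1 / real (Suc n)"
      using F_dense[OF A_cont[OF g[OF \<omega>]], of "1 / real (Suc n)"] by auto
    have "P h" if h: "h \<in> A" "\<forall>z\<in>K. cmod (h z - p z) \<le> 1 / real (Suc n)" for h
    proof -
      have "cmod (h z - g \<omega> z) \<le> r" if "z \<in> K" for z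
        using norm_triangle_ineq4[of "h z - p z" "g \<omega> z - p z"] h(2) p(2) that n by fastforce
      then show ?thesis
        using r h(1) by blast
    qed
    then have "(p, n) \<in> I"
      unfolding I_def using p(1) by blast
    with p(2) show "\<exists>(p, n)\<in>I. \<forall>z\<in>K. cmod (g \<omega> z - p z) \<le> 1 / real (Suc n)"
      by blast
  qed (use g[OF \<omega>] in \<open>auto simp: I_def\<close>)
  then have "{\<omega>\<in>space M. P (g \<omega>)} =
      {\<omega>\<in>space M. \<exists>x\<in>I. \<forall>z\<in>K. cmod (g \<omega> z - fst x z) \<le> 1 / real (Suc (snd x))}"
    by force
  also have "\<dots> \<in> sets M"
  proof (rule sets.sets_Collect_countable_Ex'[OF _ \<open>countable I\<close>])
    fix x assume "x \<in> I"
    then have "continuous_on K (fst x)"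
      unfolding I_def using F_cont by auto
    then show "{\<omega>\<in>space M. \<forall>z\<in>K. cmod (g \<omega> z - fst x z) \<le> 1 / real (Suc (snd x))} \<in> sets M"
      using compact_imp_closed[OF \<open>compact K\<close>] A_cont g meas by (intro sets_Collect_sup_dist_le) auto
  qed
  finally show ?thesis .
qed

lemma bdd_above_infdist_compact:
  assumes "compact S"
  shows "bdd_above ((\<lambda>x. infdist x T) ` S)"
proof -
  have "continuous_on S (\<lambda>x. infdist x T)"
    by (intro continuous_on_infdist continuous_on_id)
  then have "compact ((\<lambda>x. infdist x T) ` S)"
    using assms by (rule compact_continuous_image)
  then show ?thesis
    by (intro bounded_imp_bdd_above compact_imp_bounded)
qed

lemma hausdist_le_iff:
  assumes "X \<in> nonempty_compacts" and "Y \<in> nonempty_compacts"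
  shows "hausdist X Y \<le> q \<longleftrightarrow> (\<forall>x\<in>X. infdist x Y \<le> q) \<and> (\<forall>y\<in>Y. infdist y X \<le> q)"
proof -
  have X: "X \<noteq> {}" "compact X" and Y: "Y \<noteq> {}" "compact Y"
    using assms by (simp_all add: nonempty_compacts_def)
  show ?thesis
    unfolding hausdist_def max.bounded_iff
    using cSUP_le_iff[OF X(1) bdd_above_infdist_compact[OF X(2)]]
      cSUP_le_iff[OF Y(1) bdd_above_infdist_compact[OF Y(2)]]
    by simp
qed

lemma hausdist_commute: "hausdist X Y = hausdist Y X"
  unfolding hausdist_def by (simp add: max.commute)

lemma infdist_le_add_of_infdist_le:
  assumes "Y \<noteq> {}" and "\<forall>y\<in>Y. infdist y W \<le> c" and "infdist x Y \<le> d"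
  shows "infdist x W \<le> c + d"
proof -
  have "infdist x W - c \<le> infdist x Y"
    unfolding infdist_notempty[OF \<open>Y \<noteq> {}\<close>]
  proof (rule cINF_greatest[OF \<open>Y \<noteq> {}\<close>])
    fix y assume "y \<in> Y"
    then show "infdist x W - c \<le> dist x y"
      using assms(2) infdist_triangle[of x W y] by fastforce
  qed
  with assms(3) show ?thesis
    by linarith
qed

lemma hausdist_triangle:
  assumes X: "X \<in> nonempty_compacts" and Y: "Y \<in> nonempty_compacts" and Z: "Z \<in> nonempty_compacts"
  shows "hausdist X Z \<le> hausdist X Y + hausdist Y Z"
proof -
  have "Y \<noteq> {}"
    using Y by (simp add: nonempty_compacts_def)
  have XY: "\<forall>x\<in>X. infdist x Y \<le> hausdist X Y" "\<forall>y\<in>Y. infdist y X \<le> hausdist X Y"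
    using hausdist_le_iff[OF X Y] by blast+
  have YZ: "\<forall>y\<in>Y. infdist y Z \<le> hausdist Y Z" "\<forall>z\<in>Z. infdist z Y \<le> hausdist Y Z"
    using hausdist_le_iff[OF Y Z] by blast+
  have "\<forall>x\<in>X. infdist x Z \<le> hausdist X Y + hausdist Y Z"
    using infdist_le_add_of_infdist_le[OF \<open>Y \<noteq> {}\<close> YZ(1)] XY(1) by (simp add: add.commute)
  moreover have "\<forall>z\<in>Z. infdist z X \<le> hausdist X Y + hausdist Y Z"
    using infdist_le_add_of_infdist_le[OF \<open>Y \<noteq> {}\<close> XY(2)] YZ(2) by simp
  ultimately show ?thesis
    using hausdist_le_iff[OF X Z] by blast
qed

lemma finite_nonempty_compacts: "finite X \<Longrightarrow> X \<noteq> {} \<Longrightarrow> X \<in> nonempty_compacts"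
  by (simp add: nonempty_compacts_def finite_imp_compact)

lemma hausdist_finite_approx:
  assumes Y: "Y \<in> nonempty_compacts" and D: "\<And>x e. 0 < e \<Longrightarrow> \<exists>d\<in>D. dist d x < e" and "0 < e"
  obtains X where "finite X" "X \<noteq> {}" "X \<subseteq> D" "hausdist X Y \<le> e"
proof -
  have "compact Y" "Y \<noteq> {}"
    using Y by (auto simp: nonempty_compacts_def)
  have "Y \<subseteq> (\<Union>y\<in>Y. ball y (e / 2))"
  proof
    fix y assume "y \<in> Y"
    then show "y \<in> (\<Union>y\<in>Y. ball y (e / 2))"
      by (rule UN_I) (simp add: \<open>0 < e\<close>)
  qed
  then obtain F where F: "F \<subseteq> Y" "finite F" "Y \<subseteq> (\<Union>y\<in>F. ball y (e / 2))"
    using compactE_image[OF \<open>compact Y\<close>, of Y "\<lambda>y. ball y (e / 2)"] by blast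
  have "\<exists>d\<in>D. dist d y < e / 2" for y
    using D[of "e / 2" y] \<open>0 < e\<close> by simp
  then obtain v where v: "\<And>y. v y \<in> D" "\<And>y. dist (v y) y < e / 2"
    by metis
  define X where "X = v ` F"
  have X: "finite X" "X \<noteq> {}" "X \<subseteq> D"
    using F \<open>Y \<noteq> {}\<close> v unfolding X_def by auto
  have "\<forall>x\<in>X. infdist x Y \<le> e"
  proof
    fix x assume "x \<in> X"
    then obtain y where "y \<in> Y" "x = v y"
      using F(1) unfolding X_def by blast
    moreover have "dist x y \<le> e"
      using v(2)[of y] \<open>x = v y\<close> \<open>0 < e\<close> by simp
    ultimately show "infdist x Y \<le> e"
      by (intro infdist_le2)
  qed
  moreover have "\<forall>z\<in>Y. infdist z X \<le> e"
  proof
    fix z assume "z \<in> Y"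
    then have "z \<in> (\<Union>y\<in>F. ball y (e / 2))"
      using F(3) by (rule subsetD[rotated])
    then obtain y where "y \<in> F" "dist y z < e / 2"
      by auto
    moreover have "dist z (v y) \<le> dist z y + dist (v y) y"
      using dist_triangle[of z "v y" y] by (simp add: dist_commute)
    ultimately show "infdist z X \<le> e"
      using v(2)[of y] infdist_le2[of "v y" X z e] unfolding X_def by (simp add: dist_commute)
  qed
  ultimately have "hausdist X Y \<le> e"
    using hausdist_le_iff[OF finite_nonempty_compacts[OF X(1,2)] Y] by blast
  with X show ?thesis
    by (rule that)
qed

lemma hausdorff_open_finite_center:
  assumes U: "hausdorff_open U" and "Y \<in> U" and D: "\<And>x e. 0 < e \<Longrightarrow> \<exists>d\<in>D. dist d x < e"
  obtains X k where "finite X" "X \<noteq> {}" "X \<subseteq> D" "hausdist X Y < 1 / real (Suc k)"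
    "\<forall>Z\<in>nonempty_compacts. hausdist X Z < 1 / real (Suc k) \<longrightarrow> Z \<in> U"
proof -
  have Y: "Y \<in> nonempty_compacts"
    using U \<open>Y \<in> U\<close> unfolding hausdorff_open_def by blast
  obtain e where "e > 0" and e: "\<forall>Z\<in>nonempty_compacts. hausdist Y Z < e \<longrightarrow> Z \<in> U"
    using U \<open>Y \<in> U\<close> unfolding hausdorff_open_def by blast
  obtain k :: nat where k: "1 / real (Suc k) < e / 2"
    using nat_approx_posE[of "e / 2"] \<open>e > 0\<close> by auto
  obtain X where X: "finite X" "X \<noteq> {}" "X \<subseteq> D" "hausdist X Y \<le> 1 / real (Suc k) / 2"
    using hausdist_finite_approx[OF Y D, of "1 / real (Suc k) / 2"] by auto
  have half: "a / 2 < a" if "0 < a" for a :: real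
    using that by linarith
  have "1 / real (Suc k) / 2 < 1 / real (Suc k)"
    by (rule half) simp
  with X(4) have XY: "hausdist X Y < 1 / real (Suc k)"
    by linarith
  have "\<forall>Z\<in>nonempty_compacts. hausdist X Z < 1 / real (Suc k) \<longrightarrow> Z \<in> U"
  proof (intro ballI impI)
    fix Z assume Z: "Z \<in> nonempty_compacts" "hausdist X Z < 1 / real (Suc k)"
    have "hausdist Y Z \<le> hausdist Y X + hausdist X Z"
      using hausdist_triangle[OF Y finite_nonempty_compacts[OF X(1,2)] Z(1)] .
    also have "\<dots> < e"
      using XY Z(2) k by (simp add: hausdist_commute)
    finally show "Z \<in> U"
      using e Z(1) by blast
  qed
  with X(1-3) XY show ?thesis
    by (rule that)
qed

lemma hausdorff_open_Union_balls:
  assumes "hausdorff_open U"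
  obtains I where "countable I" and "\<And>X r. (X, r) \<in> I \<Longrightarrow> finite X \<and> X \<noteq> {}"
    and "U = {Y \<in> nonempty_compacts. \<exists>(X, r)\<in>I. hausdist X Y < r}"
proof -
  obtain D :: "complex set" where "countable D" and D: "\<And>x e. 0 < e \<Longrightarrow> \<exists>d\<in>D. dist d x < e"
    by (rule countable_dense_setE) blast
  define I where "I = {(X, r). finite X \<and> X \<noteq> {} \<and> X \<subseteq> D \<and> r \<in> range (\<lambda>k. 1 / real (Suc k)) \<and>
    (\<forall>Z\<in>nonempty_compacts. hausdist X Z < r \<longrightarrow> Z \<in> U)}"
  have "I \<subseteq> {X. finite X \<and> X \<subseteq> D} \<times> range (\<lambda>k. 1 / real (Suc k))"
    unfolding I_def by auto
  moreover have "countable ({X. finite X \<and> X \<subseteq> D} \<times> range (\<lambda>k. 1 / real (Suc k)))"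
    using countable_Collect_finite_subset[OF \<open>countable D\<close>] by simp
  ultimately have "countable I"
    by (rule countable_subset)
  have I_finite: "finite X \<and> X \<noteq> {}" if "(X, r) \<in> I" for X r
    using that unfolding I_def by simp
  have I_ball: "Y \<in> U" if "(X, r) \<in> I" "Y \<in> nonempty_compacts" "hausdist X Y < r" for X r Y
    using that unfolding I_def by simp
  have I_cover: "\<exists>(X, r)\<in>I. hausdist X Y < r" if "Y \<in> U" for Y
  proof -
    obtain X k where X: "finite X" "X \<noteq> {}" "X \<subseteq> D" "hausdist X Y < 1 / real (Suc k)"
      and "\<forall>Z\<in>nonempty_compacts. hausdist X Z < 1 / real (Suc k) \<longrightarrow> Z \<in> U"
      by (rule hausdorff_open_finite_center[OF assms \<open>Y \<in> U\<close> D])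
    then have "(X, 1 / real (Suc k)) \<in> I"
      unfolding I_def by simp
    with X(4) show ?thesis
      by (intro bexI[of _ "(X, 1 / real (Suc k))"]) simp_all
  qed
  have "U = {Y \<in> nonempty_compacts. \<exists>(X, r)\<in>I. hausdist X Y < r}"
  proof (intro equalityI subsetI)
    fix Y assume "Y \<in> U"
    moreover have "U \<subseteq> nonempty_compacts"
      using assms unfolding hausdorff_open_def by blast
    ultimately show "Y \<in> {Y \<in> nonempty_compacts. \<exists>(X, r)\<in>I. hausdist X Y < r}"
      using I_cover[OF \<open>Y \<in> U\<close>] by (simp add: subsetD)
  next
    fix Y assume "Y \<in> {Y \<in> nonempty_compacts. \<exists>(X, r)\<in>I. hausdist X Y < r}"
    then obtain X r where "(X, r) \<in> I" "Y \<in> nonempty_compacts" "hausdist X Y < r"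
      by auto
    then show "Y \<in> U"
      by (rule I_ball)
  qed
  with \<open>countable I\<close> I_finite show ?thesis
    by (rule that)
qed

lemma sets_Collect_disjoint_open:
  fixes F :: "'w \<Rightarrow> 'a::euclidean_space set"
  assumes hit: "\<And>C. compact C \<Longrightarrow> {\<omega>\<in>space M. F \<omega> \<inter> C = {}} \<in> sets M" and "open U"
  shows "{\<omega>\<in>space M. F \<omega> \<inter> U = {}} \<in> sets M"
proof -
  obtain \<D> where "countable \<D>" and boxes: "\<And>X. X \<in> \<D> \<Longrightarrow> \<exists>a b. X = cbox a b" and "\<Union>\<D> = U"
    using open_countable_Union_open_cbox[OF \<open>open U\<close>] by metis
  then have "{\<omega>\<in>space M. F \<omega> \<inter> U = {}} = {\<omega>\<in>space M. \<forall>X\<in>\<D>. F \<omega> \<inter> X = {}}"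
    by blast
  also have "\<dots> \<in> sets M"
  proof (intro sets.sets_Collect_countable_All' hit \<open>countable \<D>\<close>)
    fix X assume "X \<in> \<D>"
    then obtain a b where "X = cbox a b"
      using boxes by blast
    then show "compact X"
      by simp
  qed
  finally show ?thesis .
qed

lemma sets_Collect_infdist_le:
  fixes F :: "'w \<Rightarrow> 'a::euclidean_space set"
  assumes "\<And>\<omega>. \<omega> \<in> space M \<Longrightarrow> closed (F \<omega>) \<and> F \<omega> \<noteq> {}"
    and hit: "\<And>C. compact C \<Longrightarrow> {\<omega>\<in>space M. F \<omega> \<inter> C = {}} \<in> sets M"
  shows "{\<omega>\<in>space M. infdist x (F \<omega>) \<le> q} \<in> sets M"
proof -
  have "infdist x (F \<omega>) \<le> q \<longleftrightarrow> \<not> F \<omega> \<inter> cball x q = {}" if \<omega>: "\<omega> \<in> space M" for \<omega>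
  proof
    assume "infdist x (F \<omega>) \<le> q"
    moreover obtain y where "y \<in> F \<omega>" "infdist x (F \<omega>) = dist x y"
      using assms(1)[OF \<omega>] by (blast intro: infdist_attains_inf)
    ultimately show "\<not> F \<omega> \<inter> cball x q = {}"
      by auto
  qed (auto intro: infdist_le2)
  then have "{\<omega>\<in>space M. infdist x (F \<omega>) \<le> q} = {\<omega>\<in>space M. \<not> F \<omega> \<inter> cball x q = {}}"
    by blast
  also have "\<dots> \<in> sets M"
    by (intro sets.sets_Collect_neg hit compact_cball)
  finally show ?thesis .
qed

lemma less_iff_ex_le_minus_inverse_Suc: "(a::real) < r \<longleftrightarrow> (\<exists>k::nat. a \<le> r - 1 / real (Suc k))"
proof
  assume "a < r"
  then obtain k :: nat where "1 / real (Suc k) < r - a"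
    using nat_approx_posE[of "r - a"] by auto
  then show "\<exists>k::nat. a \<le> r - 1 / real (Suc k)"
    by (intro exI[of _ k]) linarith
qed (smt (verit) divide_pos_pos of_nat_0_less_iff zero_less_Suc)

lemma sets_Collect_hausdist_less:
  assumes F: "\<And>\<omega>. \<omega> \<in> space M \<Longrightarrow> F \<omega> \<in> nonempty_compacts"
    and hit: "\<And>C. compact C \<Longrightarrow> {\<omega>\<in>space M. F \<omega> \<inter> C = {}} \<in> sets M"
    and "finite X" and "X \<noteq> {}"
  shows "{\<omega>\<in>space M. hausdist X (F \<omega>) < r} \<in> sets M"
proof -
  have disjoint_iff_infdist_le: "S \<inter> {y. c < infdist y X} = {} \<longleftrightarrow> (\<forall>y\<in>S. infdist y X \<le> c)" for S c
    by (auto simp: not_less)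
  have hausdist_less_iff: "hausdist X (F \<omega>) < r \<longleftrightarrow> (\<exists>k::nat. (\<forall>x\<in>X. infdist x (F \<omega>) \<le> r - 1 / real (Suc k)) \<and>
      F \<omega> \<inter> {y. r - 1 / real (Suc k) < infdist y X} = {})" if "\<omega> \<in> space M" for \<omega>
    unfolding less_iff_ex_le_minus_inverse_Suc[of _ r] disjoint_iff_infdist_le
      hausdist_le_iff[OF finite_nonempty_compacts[OF \<open>finite X\<close> \<open>X \<noteq> {}\<close>] F[OF that]] ..
  have "{\<omega>\<in>space M. hausdist X (F \<omega>) < r} = {\<omega>\<in>space M. \<exists>k::nat.
      (\<forall>x\<in>X. infdist x (F \<omega>) \<le> r - 1 / real (Suc k)) \<and> F \<omega> \<inter> {y. r - 1 / real (Suc k) < infdist y X} = {}}"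
    by (intro Collect_cong conj_cong refl hausdist_less_iff)
  also have "\<dots> \<in> sets M"
  proof (intro sets.sets_Collect_countable_Ex sets.sets_Collect_conj
      sets.sets_Collect_countable_All'[OF _ countable_finite[OF \<open>finite X\<close>]])
    show "{\<omega>\<in>space M. infdist x (F \<omega>) \<le> r - 1 / real (Suc k)} \<in> sets M" for x k
      using F hit by (intro sets_Collect_infdist_le) (auto simp: nonempty_compacts_def compact_imp_closed)
    fix k :: nat
    have "open {y. r - 1 / real (Suc k) < infdist y X}"
      by (rule open_Collect_less) (intro continuous_intros)+
    with hit show "{\<omega>\<in>space M. F \<omega> \<inter> {y. r - 1 / real (Suc k) < infdist y X} = {}} \<in> sets M"
      by (rule sets_Collect_disjoint_open)
  qed
  finally show ?thesis .
qed

lemma measurable_hausdorff_borel: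
  assumes F: "\<And>\<omega>. \<omega> \<in> space M \<Longrightarrow> F \<omega> \<in> nonempty_compacts"
    and hit: "\<And>C. compact C \<Longrightarrow> {\<omega>\<in>space M. F \<omega> \<inter> C = {}} \<in> sets M"
  shows "F \<in> measurable M hausdorff_borel"
  unfolding hausdorff_borel_def
proof (rule measurable_measure_of)
  show "{U. hausdorff_open U} \<subseteq> Pow nonempty_compacts"
    unfolding hausdorff_open_def by blast
  show "F \<in> space M \<rightarrow> nonempty_compacts"
    using F by blast
  fix U assume "U \<in> {U. hausdorff_open U}"
  then obtain I where "countable I" and I: "\<And>X r. (X, r) \<in> I \<Longrightarrow> finite X \<and> X \<noteq> {}"
    and U: "U = {Y \<in> nonempty_compacts. \<exists>(X, r)\<in>I. hausdist X Y < r}"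
    using hausdorff_open_Union_balls by blast
  have "F -` U \<inter> space M = {\<omega>\<in>space M. \<exists>x\<in>I. hausdist (fst x) (F \<omega>) < snd x}"
    unfolding U using F by (auto simp: split_beta)
  also have "\<dots> \<in> sets M"
  proof (rule sets.sets_Collect_countable_Ex'[OF _ \<open>countable I\<close>])
    fix p assume "p \<in> I"
    then have "finite (fst p)" "fst p \<noteq> {}"
      using I[of "fst p" "snd p"] by simp_all
    with F hit show "{\<omega>\<in>space M. hausdist (fst p) (F \<omega>) < snd p} \<in> sets M"
      by (rule sets_Collect_hausdist_less)
  qed
  finally show "F -` U \<inter> space M \<in> sets M" .
qed

theorem proposition6p7:
  fixes M :: "'w measure"
    and K :: "(complex ^ 'n) set"
    and A :: "(complex ^ 'n \<Rightarrow> complex) set"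
    and f :: "'w \<Rightarrow> complex ^ 'n \<Rightarrow> complex"
  assumes "compact K"
    and "uniform_algebra K A"
    and "metrizable_space (gelfand_topology K A)"
    and "separable_space (gelfand_topology K A)"
    and "\<forall>\<omega>\<in>space M. restrictK K (f \<omega>) \<in> A"
    and "\<forall>z\<in>K. (\<lambda>\<omega>. f \<omega> z) \<in> borel_measurable M"
  shows "random_compact_set M (\<lambda>\<omega>. spectrum_in K A (restrictK K (f \<omega>)))"
  unfolding random_compact_set_def
proof (rule measurable_hausdorff_borel)
  fix \<omega> assume "\<omega> \<in> space M"
  with assms(5) show "spectrum_in K A (restrictK K (f \<omega>)) \<in> nonempty_compacts"
    by (intro spectrum_in_nonempty_compacts[OF assms(2)]) blast
next
  fix C :: "complex set" assume "compact C"
  show "{\<omega>\<in>space M. spectrum_in K A (restrictK K (f \<omega>)) \<inter> C = {}} \<in> sets M"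
  proof (rule sets_Collect_sup_open[where P = "\<lambda>h. spectrum_in K A h \<inter> C = {}"])
    show "compact K"
      by fact
    show "continuous_on K h" if "h \<in> A" for h
      using assms(2) that by (rule uniform_algebra_continuous_on)
    show "restrictK K (f \<omega>) \<in> A" if "\<omega> \<in> space M" for \<omega>
      using assms(5) that by blast
    show "(\<lambda>\<omega>. restrictK K (f \<omega>) z) \<in> borel_measurable M" if "z \<in> K" for z
      using assms(6) that by simp
    show "\<exists>r>0. \<forall>h'\<in>A. (\<forall>z\<in>K. cmod (h' z - h z) \<le> r) \<longrightarrow> spectrum_in K A h' \<inter> C = {}"
      if "h \<in> A" and "spectrum_in K A h \<inter> C = {}" for h
      using assms(2) that(1) \<open>compact C\<close> that(2) by (rule spectrum_in_upper_semicontinuous)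
  qed
qed

end
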